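(* Let $m,n,p\ge3$, let $A=W_m(a,c,b,d)$, $B=W_n(a,b,c,d)$ (states $q_0,\dots,q_{n-1}$), $C=W_p(d,b,c,a)$ (states $r_0,\dots,r_{p-1}$), and let $D$ be the automaton built from them. Let $(i_1,S_1)\neq(i_2,S_2)$ be two states of $D$ such that $S_1,S_2$ are saturated tableaux and, for $k=1,2$, $(q_0,r_0)\in S_k$ whenever $i_k=m-1$. Then $(i_1,S_1)$ and $(i_2,S_2)$ are not equivalent, i.e. there is a word $w\in\Sigma^*$ such that exactly one of $(i_1,S_1)\cdot w$, $(i_2,S_2)\cdot w$ lies in $F_D$.
   Context: Alphabet $\Sigma=\{a,b,c,d\}$. For distinct symbols $x_1,x_2,x_3,x_4$, $W_k(x_1,x_2,x_3,x_4)$ is the complete DFA with states $\{0,\dots,k-1\}$, initial state $0$, unique final state $k-1$, where $x_1$ acts as the cycle $j\mapsto j+1\bmod k$, $x_2$ swaps $k-2$ and $k-1$, $x_3$ sends $1$ to $0$ and fixes the others, and $x_4$ is the identity. Automaton $D$: states $Q_A\times 2^{Q_B\times Q_C}$, initial state $(0,\emptyset)$; $(i,S)\in F_D$ iff $S$ contains $(q,r)$ with exactly one of $q$ final in $B$, $r$ final in $C$; $(i,S)\cdot x=(i\cdot x,S\cdot x)$ if $i\cdot x$ is not final in $A$, and $(i\cdot x,S\cdot x\cup\{(q_0,r_0)\})$ otherwise, where $S\cdot x=\{(q\cdot x,r\cdot x):(q,r)\in S\}$. A tableau $S\subseteq Q_B\times Q_C$ is saturated if whenever $(q_x,r_{x'}),(q_x,r_{y'}),(q_y,r_{y'})\in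 S$ then $(q_y,r_{x'})\in S$. *)

theory Defs
  imports Main
begin

datatype sym = a | b | c | d

text \<open>Transition function of W_k(x1,x2,x3,x4) on states 0..k-1 (initial 0, final k-1).\<close>
definition W_step :: "nat \<Rightarrow> sym \<Rightarrow> sym \<Rightarrow> sym \<Rightarrow> sym \<Rightarrow> nat \<Rightarrow> sym \<Rightarrow> nat" where
  "W_step k x1 x2 x3 x4 j s =
     (if s = x1 then (j + 1) mod k
      else if s = x2 then (if j = k - 2 then k - 1 else if j = k - 1 then k - 2 else j)
      else if s = x3 then (if j = 1 then 0 else j)
      else j)"

definition stepA :: "nat \<Rightarrow> nat \<Rightarrow> sym \<Rightarrow> nat" where
  "stepA m = W_step m a c b d"

definition stepB :: "nat \<Rightarrow> nat \<Rightarrow> sym \<Rightarrow> nat" where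
  "stepB n = W_step n a b c d"

definition stepC :: "nat \<Rightarrow> nat \<Rightarrow> sym \<Rightarrow> nat" where
  "stepC p = W_step p d b c a"

definition stepD :: "nat \<Rightarrow> nat \<Rightarrow> nat \<Rightarrow> nat \<times> (nat \<times> nat) set \<Rightarrow> sym \<Rightarrow> nat \<times> (nat \<times> nat) set" where
  "stepD m n p st x =
     (let i' = stepA m (fst st) x;
          S' = (\<lambda>(q, r). (stepB n q x, stepC p r x)) ` snd st
      in if i' = m - 1 then (i', insert (0, 0) S') else (i', S'))"

definition runD :: "nat \<Rightarrow> nat \<Rightarrow> nat \<Rightarrow> nat \<times> (nat \<times> nat) set \<Rightarrow> sym list \<Rightarrow> nat \<times> (nat \<times> nat) set" where
  "runD m n p st w = fold (\<lambda>x st. stepD m n p st x) w st"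

definition finalD :: "nat \<Rightarrow> nat \<Rightarrow> nat \<times> (nat \<times> nat) set \<Rightarrow> bool" where
  "finalD n p st \<longleftrightarrow> (\<exists>(q, r) \<in> snd st. (q = n - 1) \<noteq> (r = p - 1))"

definition stateD :: "nat \<Rightarrow> nat \<Rightarrow> nat \<Rightarrow> nat \<times> (nat \<times> nat) set \<Rightarrow> bool" where
  "stateD m n p st \<longleftrightarrow> fst st < m \<and> snd st \<subseteq> {0..<n} \<times> {0..<p}"

definition saturated :: "(nat \<times> nat) set \<Rightarrow> bool" where
  "saturated S \<longleftrightarrow> (\<forall>qx qy rx ry. (qx, rx) \<in> S \<and> (qx, ry) \<in> S \<and> (qy, ry) \<in> S \<longrightarrow> (qy, rx) \<in> S)"

end

theory Submission
  imports Defs "HOL-Combinatorics.Transposition"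
begin

(*
  From state 0 of A the words abb, b, c and d loop without entering the final state of A, and on
  Q_B x Q_C they act as (rotation, identity), (swap, swap), (merge, merge) and (identity, rotation),
  where the swap exchanges the two top states and the merge sends 1 to 0. Conjugating by rotations
  moves swap and merge to any adjacent pair independently in B and C; applying them in one
  component at a place where the target set of the other component has two equal neighbours,
  every pair (F, G) arises as the sets of B- and C-states that some loop sends to the final
  states. Hence (0, T1) and (0, T2) are inequivalent as soon as some (F, G) separates T2
  (q \<in> F \<longleftrightarrow> r \<in> G on all pairs) but not T1.

  If i1 = i2 and (q, r) \<in> S1 - S2, saturation of S2 makes F = {q} \<union> {rows sharing a column with q
  in S2}, G = {columns of q in S2} such a pair; a permutation word brings A to state 0, and when
  this must pass the final state, the inserted pair is steered onto a pair consistent with (F, G).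
  If i1 \<noteq> i2, rotating A brings one state to 0 and the other to j \<noteq> 0, and a probe word then
  occupies column 0 in the second tableau only.
*)

section \<open>Rotations, merges and swaps of {..<k}\<close>

definition rot :: "nat \<Rightarrow> nat \<Rightarrow> nat \<Rightarrow> nat" where
  "rot k j q = (q + j) mod k"

definition redirect :: "nat \<Rightarrow> nat \<Rightarrow> nat \<Rightarrow> nat" where
  "redirect x y q = (if q = x then y else q)"

lemma rot_less: "0 < k \<Longrightarrow> rot k j q < k"
  by (simp add: rot_def)

lemma rot_rot: "rot k i (rot k j q) = rot k (j + i) q"
  by (simp add: rot_def mod_add_left_eq add.assoc)

lemma rot_inverse: "q < k \<Longrightarrow> j \<le> k \<Longrightarrow> rot k (k - j) (rot k j q) = q"
  by (simp add: rot_rot) (simp add: rot_def)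

lemma bij_betw_rot:
  assumes "j \<le> k"
  shows "bij_betw (rot k j) {..<k} {..<k}"
proof (rule bij_betw_byWitness[where f' = "rot k (k - j)"])
  show "\<forall>q \<in> {..<k}. rot k (k - j) (rot k j q) = q"
    using rot_inverse assms by simp
  show "\<forall>q \<in> {..<k}. rot k j (rot k (k - j) q) = q"
    using rot_inverse[of _ k "k - j"] assms by simp
qed (auto simp: rot_def)

lemma rot_conj_redirect:
  assumes "x < k" "q < k" "j \<le> k"
  shows "rot k (k - j) (redirect (rot k j x) v (rot k j q)) = redirect x (rot k (k - j) v) q"
proof (cases "q = x")
  case False
  then have "rot k j q \<noteq> rot k j x"
    using assms by (metis rot_inverse)
  then show ?thesis
    using assms False by (simp add: redirect_def rot_inverse)
qed (simp add: redirect_def)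

lemma rot_conj_transpose:
  assumes "x < k" "y < k" "q < k" "j \<le> k"
  shows "rot k (k - j) (transpose (rot k j x) (rot k j y) (rot k j q)) = transpose x y q"
proof -
  have "rot k j u = rot k j u' \<longleftrightarrow> u = u'" if "u < k" "u' < k" for u u'
    using that assms by (metis rot_inverse)
  then show ?thesis
    using assms by (auto simp: transpose_def rot_inverse)
qed

lemma rot_conj_merge:
  assumes "0 < x" "x < k" "q < k"
  shows "rot k (x - 1) (redirect 1 0 (rot k (k + 1 - x) q)) = redirect x (x - 1) q"
proof -
  have "rot k (k + 1 - x) x = 1" "rot k (k - (k + 1 - x)) 0 = x - 1" "k - (k + 1 - x) = x - 1"
    using assms by (simp_all add: rot_def mod_Suc)
  then show ?thesis
    using rot_conj_redirect[of x k q "k + 1 - x" 0] assms by simp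
qed

lemma rot_conj_swap:
  assumes "Suc x < k" "q < k"
  shows "rot k (x + 2) (transpose (k - 2) (k - 1) (rot k (k - 2 - x) q)) = transpose x (Suc x) q"
proof -
  have "rot k (k - 2 - x) x = k - 2" "rot k (k - 2 - x) (Suc x) = k - 1" "k - (k - 2 - x) = x + 2"
    using assms by (simp_all add: rot_def)
  then show ?thesis
    using rot_conj_transpose[of x k "Suc x" q "k - 2 - x"] assms by simp
qed

lemma rot_two_eq_one: "3 \<le> k \<Longrightarrow> v < k \<Longrightarrow> rot k 2 v = 1 \<longleftrightarrow> v = k - 1"
  by (cases "v + 2 < k") (auto simp: rot_def mod_if)

lemma rot_pred_eq_zero:
  assumes "2 \<le> k" "v < k"
  shows "rot k (k - 1) v = 0 \<longleftrightarrow> v = 1"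
proof -
  have "rot k 1 (rot k (k - 1) v) = v"
    using rot_inverse[of v k "k - 1"] assms by simp
  then show ?thesis
    using assms by (auto simp: rot_def)
qed

lemma stepA_simps [simp]:
  "stepA m i a = Suc i mod m" "stepA m i b = redirect 1 0 i"
  "stepA m i c = transpose (m - 2) (m - 1) i" "stepA m i d = i"
  by (simp_all add: stepA_def W_step_def redirect_def transpose_def)

lemma stepB_simps [simp]:
  "stepB n q a = Suc q mod n" "stepB n q b = transpose (n - 2) (n - 1) q"
  "stepB n q c = redirect 1 0 q" "stepB n q d = q"
  by (simp_all add: stepB_def W_step_def redirect_def transpose_def)

lemma stepC_simps [simp]:
  "stepC p r a = r" "stepC p r b = transpose (p - 2) (p - 1) r"
  "stepC p r c = redirect 1 0 r" "stepC p r d = Suc r mod p"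
  by (simp_all add: stepC_def W_step_def redirect_def transpose_def)

definition runA :: "nat \<Rightarrow> sym list \<Rightarrow> nat \<Rightarrow> nat" where
  "runA m w i = fold (\<lambda>x i. stepA m i x) w i"

definition runB :: "nat \<Rightarrow> sym list \<Rightarrow> nat \<Rightarrow> nat" where
  "runB n w q = fold (\<lambda>x q. stepB n q x) w q"

definition runC :: "nat \<Rightarrow> sym list \<Rightarrow> nat \<Rightarrow> nat" where
  "runC p w r = fold (\<lambda>x r. stepC p r x) w r"

lemma runA_simps [simp]:
  "runA m [] i = i" "runA m (x # w) i = runA m w (stepA m i x)"
  "runA m (u @ w) i = runA m w (runA m u i)"
  by (simp_all add: runA_def)

lemma runB_simps [simp]:
  "runB n [] q = q" "runB n (x # w) q = runB n w (stepB n q x)"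
  "runB n (u @ w) q = runB n w (runB n u q)"
  by (simp_all add: runB_def)

lemma runC_simps [simp]:
  "runC p [] r = r" "runC p (x # w) r = runC p w (stepC p r x)"
  "runC p (u @ w) r = runC p w (runC p u r)"
  by (simp_all add: runC_def)

lemma runD_simps [simp]:
  "runD m n p st [] = st" "runD m n p st (x # w) = runD m n p (stepD m n p st x) w"
  "runD m n p st (u @ w) = runD m n p (runD m n p st u) w"
  by (simp_all add: runD_def)

lemma runA_replicate_a: "i < m \<Longrightarrow> runA m (replicate k a) i = rot m k i"
  by (induction k arbitrary: i) (simp_all add: rot_def mod_add_left_eq)

lemma stepB_less: "2 \<le> n \<Longrightarrow> q < n \<Longrightarrow> stepB n q x < n"
  by (cases x) (auto simp: redirect_def transpose_def)

lemma stepC_less: "2 \<le> p \<Longrightarrow> r < p \<Longrightarrow> stepC p r x < p"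
  by (cases x) (auto simp: redirect_def transpose_def)

lemma runB_less: "2 \<le> n \<Longrightarrow> q < n \<Longrightarrow> runB n w q < n"
  by (induction w arbitrary: q) (simp_all add: stepB_less)

lemma runC_less: "2 \<le> p \<Longrightarrow> r < p \<Longrightarrow> runC p w r < p"
  by (induction w arbitrary: r) (simp_all add: stepC_less)

lemma bij_betw_stepB: "2 \<le> n \<Longrightarrow> x \<noteq> c \<Longrightarrow> bij_betw (\<lambda>q. stepB n q x) {..<n} {..<n}"
  using bij_betw_rot[of 1 n] by (cases x) (simp_all add: rot_def[abs_def] bij_betw_id[unfolded id_def])

lemma bij_betw_stepC: "2 \<le> p \<Longrightarrow> x \<noteq> c \<Longrightarrow> bij_betw (\<lambda>r. stepC p r x) {..<p} {..<p}"
  using bij_betw_rot[of 1 p] by (cases x) (simp_all add: rot_def[abs_def] bij_betw_id[unfolded id_def])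

lemma bij_betw_runB: "2 \<le> n \<Longrightarrow> c \<notin> set w \<Longrightarrow> bij_betw (runB n w) {..<n} {..<n}"
proof (induction w)
  case (Cons x w)
  have "bij_betw (\<lambda>q. stepB n q x) {..<n} {..<n}" "bij_betw (runB n w) {..<n} {..<n}"
    using Cons by (auto intro: bij_betw_stepB)
  then have "bij_betw (runB n w \<circ> (\<lambda>q. stepB n q x)) {..<n} {..<n}"
    by (rule bij_betw_trans)
  then show ?case
    by (simp add: comp_def)
qed (simp add: runB_def[abs_def] bij_betw_id[unfolded id_def])

lemma bij_betw_runC: "2 \<le> p \<Longrightarrow> c \<notin> set w \<Longrightarrow> bij_betw (runC p w) {..<p} {..<p}"
proof (induction w)
  case (Cons x w)
  have "bij_betw (\<lambda>r. stepC p r x) {..<p} {..<p}" "bij_betw (runC p w) {..<p} {..<p}"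
    using Cons by (auto intro: bij_betw_stepC)
  then have "bij_betw (runC p w \<circ> (\<lambda>r. stepC p r x)) {..<p} {..<p}"
    by (rule bij_betw_trans)
  then show ?case
    by (simp add: comp_def)
qed (simp add: runC_def[abs_def] bij_betw_id[unfolded id_def])

lemma fst_stepD [simp]: "fst (stepD m n p st x) = stepA m (fst st) x"
  by (simp add: stepD_def Let_def)

lemma snd_stepD:
  "snd (stepD m n p st x) = map_prod (\<lambda>q. stepB n q x) (\<lambda>r. stepC p r x) ` snd st
     \<union> (if stepA m (fst st) x = m - 1 then {(0, 0)} else {})"
  by (auto simp: stepD_def Let_def map_prod_def)

lemma mem_snd_stepD: "(q, r) \<in> snd st \<Longrightarrow> (stepB n q x, stepC p r x) \<in> snd (stepD m n p st x)"
  by (auto simp: snd_stepD)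

lemma fst_runD: "fst (runD m n p st w) = runA m w (fst st)"
  by (induction w arbitrary: st) simp_all

lemma runD_in_range:
  assumes "2 \<le> n" "2 \<le> p" "snd st \<subseteq> {..<n} \<times> {..<p}"
  shows "snd (runD m n p st w) \<subseteq> {..<n} \<times> {..<p}"
  using assms(3)
proof (induction w arbitrary: st)
  case (Cons x w)
  have "snd (stepD m n p st x) \<subseteq> {..<n} \<times> {..<p}"
    using Cons.prems assms stepB_less stepC_less by (auto simp: snd_stepD)
  then show ?case
    by (simp add: Cons.IH)
qed simp

fun avoids_final :: "nat \<Rightarrow> nat \<Rightarrow> sym list \<Rightarrow> bool" where
  "avoids_final m i [] \<longleftrightarrow> True"
| "avoids_final m i (x # w) \<longleftrightarrow> stepA m i x \<noteq> m - 1 \<and> avoids_final m (stepA m i x) w"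

lemma avoids_final_append [simp]:
  "avoids_final m i (u @ w) \<longleftrightarrow> avoids_final m i u \<and> avoids_final m (runA m u i) w"
  by (induction u arbitrary: i) auto

lemma runD_avoids_final:
  "avoids_final m i w \<Longrightarrow> runD m n p (i, S) w = (runA m w i, map_prod (runB n w) (runC p w) ` S)"
  by (induction w arbitrary: i S) (simp_all add: stepD_def image_image map_prod_def case_prod_beta)

section \<open>Loops at the initial state of A\<close>

definition home_loop :: "nat \<Rightarrow> sym list \<Rightarrow> bool" where
  "home_loop m w \<longleftrightarrow> avoids_final m 0 w \<and> runA m w 0 = 0"

lemma home_loop_Nil [simp]: "home_loop m []"
  by (simp add: home_loop_def)

lemma home_loop_append [intro]: "home_loop m u \<Longrightarrow> home_loop m w \<Longrightarrow> home_loop m (u @ w)"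
  by (simp add: home_loop_def)

lemma home_loop_replicate [intro]: "home_loop m w \<Longrightarrow> home_loop m (concat (replicate k w))"
  by (induction k) auto

lemma home_loop_letters [intro]:
  "3 \<le> m \<Longrightarrow> home_loop m [a, b, b]" "3 \<le> m \<Longrightarrow> home_loop m [b]"
  "3 \<le> m \<Longrightarrow> home_loop m [c]" "2 \<le> m \<Longrightarrow> home_loop m [d]"
  by (auto simp: home_loop_def redirect_def)

lemma runD_home_loop:
  "home_loop m w \<Longrightarrow> runD m n p (0, T) w = (0, map_prod (runB n w) (runC p w) ` T)"
  by (simp add: home_loop_def runD_avoids_final)

definition rotB :: "nat \<Rightarrow> sym list" where
  "rotB k = concat (replicate k [a, b, b])"

definition rotC :: "nat \<Rightarrow> sym list" where
  "rotC k = replicate k d"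

lemma runB_rotB [simp]: "q < n \<Longrightarrow> runB n (rotB k) q = rot n k q"
  by (induction k arbitrary: q) (simp_all add: rotB_def rot_def mod_add_left_eq)

lemma runC_rotB [simp]: "runC p (rotB k) r = r"
  by (induction k) (simp_all add: rotB_def)

lemma runB_rotC [simp]: "runB n (rotC k) q = q"
  by (induction k) (simp_all add: rotC_def)

lemma runC_rotC [simp]: "r < p \<Longrightarrow> runC p (rotC k) r = rot p k r"
  by (induction k arbitrary: r) (simp_all add: rotC_def rot_def mod_add_left_eq)

lemma runA_rotB: "0 < j \<Longrightarrow> j + k < m \<Longrightarrow> runA m (rotB k) j = j + k"
  by (induction k arbitrary: j) (simp_all add: rotB_def redirect_def)

lemma avoids_final_rotB: "0 < j \<Longrightarrow> j + k < m - 1 \<Longrightarrow> avoids_final m j (rotB k)"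
  by (induction k arbitrary: j) (simp_all add: rotB_def redirect_def)

lemma runA_rotC [simp]: "runA m (rotC k) i = i"
  by (induction k) (simp_all add: rotC_def)

lemma avoids_final_rotC: "i \<noteq> m - 1 \<Longrightarrow> avoids_final m i (rotC k)"
  by (induction k) (simp_all add: rotC_def)

lemma home_loop_rotB [intro]: "3 \<le> m \<Longrightarrow> home_loop m (rotB k)"
  by (auto simp: rotB_def)

lemma home_loop_rotC [intro]: "2 \<le> m \<Longrightarrow> home_loop m (rotC k)"
  by (induction k) (auto simp: rotC_def home_loop_def)

definition mergeBC :: "nat \<Rightarrow> nat \<Rightarrow> nat \<Rightarrow> nat \<Rightarrow> sym list" where
  "mergeBC n p x y = rotB (n + 1 - x) @ rotC (p + 1 - y) @ [c] @ rotB (x - 1) @ rotC (y - 1)"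

definition swapBC :: "nat \<Rightarrow> nat \<Rightarrow> nat \<Rightarrow> nat \<Rightarrow> sym list" where
  "swapBC n p x y = rotB (n - 2 - x) @ rotC (p - 2 - y) @ [b] @ rotB (x + 2) @ rotC (y + 2)"

lemma runBC_mergeBC:
  assumes "2 \<le> n" "2 \<le> p" "0 < x" "x < n" "0 < y" "y < p"
  shows "q < n \<Longrightarrow> runB n (mergeBC n p x y) q = redirect x (x - 1) q"
    and "r < p \<Longrightarrow> runC p (mergeBC n p x y) r = redirect y (y - 1) r"
  using assms rot_conj_merge[of x n q] rot_conj_merge[of y p r]
  by (simp_all add: mergeBC_def rot_less redirect_def)

lemma runBC_swapBC:
  assumes "2 \<le> n" "2 \<le> p" "Suc x < n" "Suc y < p"
  shows "q < n \<Longrightarrow> runB n (swapBC n p x y) q = transpose x (Suc x) q"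
    and "r < p \<Longrightarrow> runC p (swapBC n p x y) r = transpose y (Suc y) r"
  using assms rot_conj_swap[of x n q] rot_conj_swap[of y p r]
  by (simp_all add: swapBC_def rot_less transpose_def)

lemma home_loop_mergeBC: "3 \<le> m \<Longrightarrow> home_loop m (mergeBC n p x y)"
  unfolding mergeBC_def by (intro home_loop_append home_loop_rotB home_loop_rotC home_loop_letters) simp_all

lemma home_loop_swapBC: "3 \<le> m \<Longrightarrow> home_loop m (swapBC n p x y)"
  unfolding swapBC_def by (intro home_loop_append home_loop_rotB home_loop_rotC home_loop_letters) simp_all

section \<open>Realizing preimages of the final states\<close>

lemma lessThan_subsets_generated:
  fixes Q :: "nat set \<Rightarrow> bool"
  assumes "2 \<le> N" and top: "Q {N - 1}"
    and merge: "\<And>P x. 0 < x \<Longrightarrow> x < N \<Longrightarrow> Q P \<Longrightarrow> Q ({..<N} \<inter> redirect x (x - 1) -` P)"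
    and swap: "\<And>P x. Suc x < N \<Longrightarrow> Q P \<Longrightarrow> Q ({..<N} \<inter> transpose x (Suc x) -` P)"
    and "P \<subseteq> {..<N}"
  shows "Q P"
proof -
  have singleton: "Q {x}" if "x < N" for x
    using that
  proof (induction "N - 1 - x" arbitrary: x)
    case 0
    then have "x = N - 1" by simp
    then show ?case using top by simp
  next
    case (Suc k)
    then have "Q {Suc x}" by simp
    moreover have "{..<N} \<inter> transpose x (Suc x) -` {Suc x} = {x}"
      using Suc.prems by (auto simp: transpose_def split: if_splits)
    ultimately show ?case
      using swap[of x "{Suc x}"] Suc by simp
  qed
  have empty: "Q {}"
  proof -
    have "{..<N} \<inter> redirect 1 0 -` {1} = {}"
      by (auto simp: redirect_def split: if_splits)
    then show ?thesis
      using merge[of 1 "{1}"] singleton[of 1] \<open>2 \<le> N\<close> by simp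
  qed
  \<comment> \<open>A merge deletes the upper end of a pair of neighbours, a swap shifts an element
    with a free lower neighbour down; both decrease card P + \<Sum>P.\<close>
  show ?thesis
    using \<open>P \<subseteq> {..<N}\<close>
  proof (induction "card P + \<Sum>P" arbitrary: P rule: less_induct)
    case less
    have "finite P"
      using less.prems finite_subset by blast
    show ?case
    proof (cases "\<exists>x. Suc x \<in> P")
      case True
      then obtain x where x: "Suc x \<in> P" by blast
      show ?thesis
      proof (cases "x \<in> P")
        case True
        have "card (P - {Suc x}) < card P"
          using \<open>finite P\<close> x by (rule card_Diff1_less)
        moreover have "\<Sum>(P - {Suc x}) \<le> \<Sum>P"
          using \<open>finite P\<close> by (simp add: sum_mono2)
        ultimately have "Q (P - {Suc x})"
          using less.prems by (intro less.hyps) auto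
        moreover have "{..<N} \<inter> redirect (Suc x) x -` (P - {Suc x}) = P"
          using True x less.prems by (auto simp: redirect_def split: if_split_asm)
        ultimately show ?thesis
          using merge[of "Suc x" "P - {Suc x}"] x less.prems by auto
      next
        case False
        define P' where "P' = insert x (P - {Suc x})"
        have "card P = Suc (card (P - {Suc x}))" "\<Sum>P = Suc x + \<Sum>(P - {Suc x})"
          using card.remove[OF \<open>finite P\<close> x] sum.remove[OF \<open>finite P\<close> x, of "\<lambda>x. x"] by simp_all
        moreover have "card P' = Suc (card (P - {Suc x}))" "\<Sum>P' = x + \<Sum>(P - {Suc x})"
          using False \<open>finite P\<close> by (simp_all add: P'_def)
        ultimately have "card P' + \<Sum>P' < card P + \<Sum>P"
          by simp
        then have "Q P'"
          using x less.prems by (intro less.hyps) (auto simp: P'_def)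
        moreover have "{..<N} \<inter> transpose x (Suc x) -` P' = P"
          using False x less.prems by (auto simp: P'_def transpose_def split: if_splits)
        ultimately show ?thesis
          using swap[of x P'] x less.prems by auto
      qed
    next
      case False
      then have "P = {} \<or> P = {0}"
        by (metis not0_implies_Suc subset_singletonD subsetI singletonI)
      then show ?thesis
        using empty singleton \<open>2 \<le> N\<close> by auto
    qed
  qed
qed

definition alternating :: "nat \<Rightarrow> nat set \<Rightarrow> bool" where
  "alternating N P \<longleftrightarrow> (\<forall>x. Suc x < N \<longrightarrow> (x \<in> P \<longleftrightarrow> Suc x \<notin> P))"

lemma lessThan_subsets_generated_beside:
  fixes Rel :: "nat set \<Rightarrow> nat set \<Rightarrow> bool"
  assumes "2 \<le> N" and R: "R \<subseteq> {..<M}" "\<not> alternating M R" and top: "Rel {N - 1} R"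
    and merge: "\<And>P R x y. 0 < x \<Longrightarrow> x < N \<Longrightarrow> 0 < y \<Longrightarrow> y < M \<Longrightarrow> Rel P R \<Longrightarrow>
      Rel ({..<N} \<inter> redirect x (x - 1) -` P) ({..<M} \<inter> redirect y (y - 1) -` R)"
    and swap: "\<And>P R x y. Suc x < N \<Longrightarrow> Suc y < M \<Longrightarrow> Rel P R \<Longrightarrow>
      Rel ({..<N} \<inter> transpose x (Suc x) -` P) ({..<M} \<inter> transpose y (Suc y) -` R)"
    and "P \<subseteq> {..<N}"
  shows "Rel P R"
proof -
  \<comment> \<open>Merging or swapping two equal neighbours y, y + 1 leaves R unchanged.\<close>
  obtain y where y: "Suc y < M" "y \<in> R \<longleftrightarrow> Suc y \<in> R"
    using R(2) by (auto simp: alternating_def)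
  have idle: "{..<M} \<inter> redirect (Suc y) y -` R = R" "{..<M} \<inter> transpose y (Suc y) -` R = R"
    using y R(1) by (auto simp: redirect_def transpose_def split: if_splits)
  show ?thesis
  proof (rule lessThan_subsets_generated[where Q = "\<lambda>P. Rel P R"])
    show "Rel ({..<N} \<inter> redirect x (x - 1) -` P) R" if "0 < x" "x < N" "Rel P R" for P x
      using merge[OF that(1,2) _ y(1) that(3)] idle by simp
    show "Rel ({..<N} \<inter> transpose x (Suc x) -` P) R" if "Suc x < N" "Rel P R" for P x
      using swap[OF that(1) y(1) that(2)] idle by simp
  qed (use assms in auto)
qed

definition realizable :: "nat \<Rightarrow> nat \<Rightarrow> nat \<Rightarrow> nat set \<Rightarrow> nat set \<Rightarrow> bool" where
  "realizable m n p F G \<longleftrightarrow> (\<exists>w. home_loop m w \<and>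
     {..<n} \<inter> runB n w -` {n - 1} = F \<and> {..<p} \<inter> runC p w -` {p - 1} = G)"

lemma realizable_vimage:
  assumes "realizable m n p F G" "home_loop m u" "2 \<le> n" "2 \<le> p"
  shows "realizable m n p ({..<n} \<inter> runB n u -` F) ({..<p} \<inter> runC p u -` G)"
proof -
  obtain w where "home_loop m w" and F: "{..<n} \<inter> runB n w -` {n - 1} = F"
    and G: "{..<p} \<inter> runC p w -` {p - 1} = G"
    using assms(1) by (auto simp: realizable_def)
  have "{..<n} \<inter> runB n (u @ w) -` {n - 1} = {..<n} \<inter> runB n u -` F"
    using F runB_less[OF \<open>2 \<le> n\<close>] by auto
  moreover have "{..<p} \<inter> runC p (u @ w) -` {p - 1} = {..<p} \<inter> runC p u -` G"
    using G runC_less[OF \<open>2 \<le> p\<close>] by auto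
  ultimately show ?thesis
    using \<open>home_loop m u\<close> \<open>home_loop m w\<close> unfolding realizable_def by blast
qed

lemma realizable_merge:
  assumes "realizable m n p F G" "3 \<le> m" "2 \<le> n" "2 \<le> p" "0 < x" "x < n" "0 < y" "y < p"
  shows "realizable m n p ({..<n} \<inter> redirect x (x - 1) -` F) ({..<p} \<inter> redirect y (y - 1) -` G)"
proof -
  have "{..<n} \<inter> runB n (mergeBC n p x y) -` F = {..<n} \<inter> redirect x (x - 1) -` F"
    "{..<p} \<inter> runC p (mergeBC n p x y) -` G = {..<p} \<inter> redirect y (y - 1) -` G"
    using runBC_mergeBC assms by auto
  then show ?thesis
    using realizable_vimage[OF assms(1) home_loop_mergeBC[OF assms(2), of n p x y] assms(3,4)] by simp
qed

lemma realizable_swap: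
  assumes "realizable m n p F G" "3 \<le> m" "2 \<le> n" "2 \<le> p" "Suc x < n" "Suc y < p"
  shows "realizable m n p ({..<n} \<inter> transpose x (Suc x) -` F) ({..<p} \<inter> transpose y (Suc y) -` G)"
proof -
  have "{..<n} \<inter> runB n (swapBC n p x y) -` F = {..<n} \<inter> transpose x (Suc x) -` F"
    "{..<p} \<inter> runC p (swapBC n p x y) -` G = {..<p} \<inter> transpose y (Suc y) -` G"
    using runBC_swapBC assms by auto
  then show ?thesis
    using realizable_vimage[OF assms(1) home_loop_swapBC[OF assms(2), of n p x y] assms(3,4)] by simp
qed

lemma not_alternating_singleton: "3 \<le> N \<Longrightarrow> \<not> alternating N {N - 1}"
  by (auto simp: alternating_def intro!: exI[of _ 0])

lemma realizable_if_not_alternating: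
  assumes "3 \<le> m" "3 \<le> n" "3 \<le> p" "F \<subseteq> {..<n}" "G \<subseteq> {..<p}"
    and "\<not> alternating n F \<or> \<not> alternating p G"
  shows "realizable m n p F G"
proof -
  note merge = realizable_merge[OF _ assms(1)] and swap = realizable_swap[OF _ assms(1)]
  have top: "realizable m n p {n - 1} {p - 1}"
    unfolding realizable_def using assms by (intro exI[of _ "[]"]) auto
  have rows: "realizable m n p P R" if "P \<subseteq> {..<n}" "R \<subseteq> {..<p}" "\<not> alternating p R"
    "realizable m n p {n - 1} R" for P R
  proof (rule lessThan_subsets_generated_beside[where Rel = "realizable m n p"])
    show "realizable m n p ({..<n} \<inter> redirect x (x - 1) -` P) ({..<p} \<inter> redirect y (y - 1) -` R)"
      if "0 < x" "x < n" "0 < y" "y < p" "realizable m n p P R" for P R x y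
      using merge[OF that(5)] that assms by simp
    show "realizable m n p ({..<n} \<inter> transpose x (Suc x) -` P) ({..<p} \<inter> transpose y (Suc y) -` R)"
      if "Suc x < n" "Suc y < p" "realizable m n p P R" for P R x y
      using swap[OF that(3)] that assms by simp
  qed (use assms that in simp_all)
  have cols: "realizable m n p P R" if "P \<subseteq> {..<n}" "R \<subseteq> {..<p}" "\<not> alternating n P"
    "realizable m n p P {p - 1}" for P R
  proof (rule lessThan_subsets_generated_beside[where Rel = "\<lambda>R P. realizable m n p P R"])
    show "realizable m n p ({..<n} \<inter> redirect y (y - 1) -` P) ({..<p} \<inter> redirect x (x - 1) -` R)"
      if "0 < x" "x < p" "0 < y" "y < n" "realizable m n p P R" for P R x y
      using merge[OF that(5)] that assms by simp
    show "realizable m n p ({..<n} \<inter> transpose y (Suc y) -` P) ({..<p} \<inter> transpose x (Suc x) -` R)"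
      if "Suc x < p" "Suc y < n" "realizable m n p P R" for P R x y
      using swap[OF that(3)] that assms by simp
  qed (use assms that in simp_all)
  show ?thesis
    using assms(6)
  proof
    assume "\<not> alternating n F"
    moreover have "realizable m n p F {p - 1}"
      using rows[OF assms(4) _ not_alternating_singleton[OF assms(3)] top] assms(3) by simp
    ultimately show ?thesis
      using cols[OF assms(4,5)] by simp
  next
    assume "\<not> alternating p G"
    moreover have "realizable m n p {n - 1} G"
      using cols[OF _ assms(5) not_alternating_singleton[OF assms(2)] top] assms(2) by simp
    ultimately show ?thesis
      using rows[OF assms(4,5)] by simp
  qed
qed

lemma realizable_all:
  assumes "3 \<le> m" "3 \<le> n" "3 \<le> p" "F \<subseteq> {..<n}" "G \<subseteq> {..<p}"
  shows "realizable m n p F G"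
proof (cases "alternating n F \<and> alternating p G")
  case True
  \<comment> \<open>Swapping 0 and 1 makes an alternating F non-alternating.\<close>
  define F' where "F' = {..<n} \<inter> transpose 0 1 -` F"
  define G' where "G' = {..<p} \<inter> transpose 0 1 -` G"
  have "x \<in> F \<longleftrightarrow> Suc x \<notin> F" if "Suc x < n" for x
    using True that unfolding alternating_def by blast
  from this[of 0] this[of 1] have "0 \<in> F \<longleftrightarrow> 2 \<in> F"
    using assms(2) by (simp add: numeral_2_eq_2)
  then have "\<not> alternating n F'"
    using assms(2) by (auto simp: alternating_def F'_def numeral_2_eq_2 intro!: exI[of _ 1])
  then have "realizable m n p F' G'"
    using assms by (intro realizable_if_not_alternating) (auto simp: F'_def G'_def)
  then have "realizable m n p ({..<n} \<inter> transpose 0 1 -` F') ({..<p} \<inter> transpose 0 1 -` G')"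
    using realizable_swap[of m n p F' G' 0 0] assms by simp
  moreover have "{..<k} \<inter> transpose 0 1 -` ({..<k} \<inter> transpose 0 1 -` P) = P"
    if "P \<subseteq> {..<k}" "2 \<le> k" for P and k :: nat
  proof -
    have "transpose 0 1 x < k" if "x < k" for x
      using that \<open>2 \<le> k\<close> by (simp add: transpose_def)
    then show ?thesis
      using \<open>P \<subseteq> {..<k}\<close> by auto
  qed
  ultimately show ?thesis
    using assms unfolding F'_def G'_def by simp
next
  case False
  then show ?thesis
    using assms realizable_if_not_alternating by blast
qed

section \<open>Separated tableaux\<close>

definition separates :: "nat set \<Rightarrow> nat set \<Rightarrow> (nat \<times> nat) set \<Rightarrow> bool" where
  "separates F G T \<longleftrightarrow> (\<forall>(q, r) \<in> T. q \<in> F \<longleftrightarrow> r \<in> G)"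

lemma finalD_iff_not_separates: "finalD n p st \<longleftrightarrow> \<not> separates {n - 1} {p - 1} (snd st)"
  by (auto simp: finalD_def separates_def)

lemma separates_map_prod: "separates F G (map_prod f g ` T) \<longleftrightarrow> separates (f -` F) (g -` G) T"
  by (auto simp: separates_def)

lemma separates_cong:
  "T \<subseteq> A \<times> B \<Longrightarrow> A \<inter> F = A \<inter> F' \<Longrightarrow> B \<inter> G = B \<inter> G' \<Longrightarrow> separates F G T \<longleftrightarrow> separates F' G' T"
  unfolding separates_def by blast

lemma separates_image_iff:
  assumes "inj_on f {..<n}" "inj_on g {..<p}" "T \<subseteq> {..<n} \<times> {..<p}" "F \<subseteq> {..<n}" "G \<subseteq> {..<p}"
  shows "separates (f ` F) (g ` G) (map_prod f g ` T) \<longleftrightarrow> separates F G T"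
proof -
  have "{..<n} \<inter> f -` f ` F = {..<n} \<inter> F" "{..<p} \<inter> g -` g ` G = {..<p} \<inter> G"
    using inj_on_image_mem_iff[OF assms(1) _ assms(4)] inj_on_image_mem_iff[OF assms(2) _ assms(5)]
    by auto
  then show ?thesis
    unfolding separates_map_prod by (rule separates_cong[OF assms(3)])
qed

definition distinguishable ::
  "nat \<Rightarrow> nat \<Rightarrow> nat \<Rightarrow> nat \<times> (nat \<times> nat) set \<Rightarrow> nat \<times> (nat \<times> nat) set \<Rightarrow> bool" where
  "distinguishable m n p st1 st2 \<longleftrightarrow>
     (\<exists>w. finalD n p (runD m n p st1 w) \<noteq> finalD n p (runD m n p st2 w))"

lemma distinguishable_sym: "distinguishable m n p st1 st2 \<Longrightarrow> distinguishable m n p st2 st1"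
  unfolding distinguishable_def by fastforce

lemma distinguishable_runD:
  assumes "distinguishable m n p (runD m n p st1 u) (runD m n p st2 u)"
  shows "distinguishable m n p st1 st2"
proof -
  obtain w where "finalD n p (runD m n p (runD m n p st1 u) w) \<noteq> finalD n p (runD m n p (runD m n p st2 u) w)"
    using assms unfolding distinguishable_def by blast
  then have "finalD n p (runD m n p st1 (u @ w)) \<noteq> finalD n p (runD m n p st2 (u @ w))"
    by simp
  then show ?thesis
    unfolding distinguishable_def by blast
qed

lemma distinguishable_if_separates:
  assumes "3 \<le> m" "3 \<le> n" "3 \<le> p" "T1 \<subseteq> {..<n} \<times> {..<p}" "T2 \<subseteq> {..<n} \<times> {..<p}"
    and "F \<subseteq> {..<n}" "G \<subseteq> {..<p}" "\<not> separates F G T1" "separates F G T2"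
  shows "distinguishable m n p (0, T1) (0, T2)"
proof -
  obtain w where w: "home_loop m w" "{..<n} \<inter> runB n w -` {n - 1} = F"
    "{..<p} \<inter> runC p w -` {p - 1} = G"
    using realizable_all[OF assms(1-3,6,7)] by (auto simp: realizable_def)
  have "finalD n p (runD m n p (0, T) w) \<longleftrightarrow> \<not> separates F G T" if "T \<subseteq> {..<n} \<times> {..<p}" for T
  proof -
    have "finalD n p (runD m n p (0, T) w) \<longleftrightarrow> \<not> separates (runB n w -` {n - 1}) (runC p w -` {p - 1}) T"
      by (simp add: runD_home_loop[OF w(1)] finalD_iff_not_separates separates_map_prod)
    also have "\<dots> \<longleftrightarrow> \<not> separates F G T"
      using separates_cong[OF that] w(2,3) assms(6,7) by blast
    finally show ?thesis .
  qed
  then show ?thesis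
    using assms unfolding distinguishable_def by blast
qed

lemma distinguishable_after_bijections:
  assumes "3 \<le> m" "3 \<le> n" "3 \<le> p"
    and f: "bij_betw f {..<n} {..<n}" and g: "bij_betw g {..<p} {..<p}"
    and run1: "runD m n p st1 u = (0, map_prod f g ` T1)" and run2: "runD m n p st2 u = (0, map_prod f g ` T2)"
    and T: "T1 \<subseteq> {..<n} \<times> {..<p}" "T2 \<subseteq> {..<n} \<times> {..<p}"
    and FG: "F \<subseteq> {..<n}" "G \<subseteq> {..<p}" and sep: "\<not> separates F G T1" "separates F G T2"
  shows "distinguishable m n p st1 st2"
proof (rule distinguishable_runD)
  have image_range: "map_prod f g ` T \<subseteq> {..<n} \<times> {..<p}" if "T \<subseteq> {..<n} \<times> {..<p}" for T
    using that bij_betw_imp_surj_on[OF f] bij_betw_imp_surj_on[OF g] by fastforce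
  note inj = bij_betw_imp_inj_on[OF f] bij_betw_imp_inj_on[OF g]
  show "distinguishable m n p (runD m n p st1 u) (runD m n p st2 u)"
    unfolding run1 run2
  proof (rule distinguishable_if_separates[OF assms(1-3) image_range[OF T(1)] image_range[OF T(2)]])
    show "f ` F \<subseteq> {..<n}" "g ` G \<subseteq> {..<p}"
      using FG bij_betw_imp_surj_on[OF f] bij_betw_imp_surj_on[OF g] by blast+
    show "\<not> separates (f ` F) (g ` G) (map_prod f g ` T1)" "separates (f ` F) (g ` G) (map_prod f g ` T2)"
      using separates_image_iff[OF inj _ FG] T sep by simp_all
  qed
qed

section \<open>States with equal A-components\<close>

definition exit_word :: "nat \<Rightarrow> nat \<Rightarrow> bool \<Rightarrow> nat \<Rightarrow> sym list" where
  "exit_word m i s t = rotC t @ rotB (m - 2 - i) @ (if s then [b] else []) @ [a, a]"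

lemma runD_exit_word:
  fixes s :: bool and t :: nat
  assumes "2 \<le> i" "i \<le> m - 2" "2 \<le> n"
  defines "u \<equiv> exit_word m i s t"
  shows "runD m n p (i, S) u = (0, insert (1, 0) (map_prod (runB n u) (runC p u) ` S))"
proof -
  define v where "v = rotC t @ rotB (m - 2 - i) @ (if s then [b] else [])"
  have "avoids_final m i v" "runA m v i = m - 2"
    using assms by (auto simp: v_def avoids_final_rotC avoids_final_rotB runA_rotB redirect_def)
  then have "runD m n p (i, S) v = (m - 2, map_prod (runB n v) (runC p v) ` S)"
    by (simp add: runD_avoids_final)
  moreover have "u = v @ [a, a]"
    by (simp add: u_def v_def exit_word_def)
  moreover have "Suc (m - 2) = m - 1" "Suc (m - 1) mod m = 0" "m - 1 \<noteq> 0" "Suc 0 mod n = 1"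
    using assms by auto
  ultimately show ?thesis
    by (simp add: stepD_def Let_def image_image map_prod_def case_prod_beta)
qed

lemma runB_exit_word:
  "q < n \<Longrightarrow> runB n (exit_word m i s t) q =
     rot n 2 ((if s then transpose (n - 2) (n - 1) else id) (rot n (m - 2 - i) q))"
  by (cases s) (simp_all add: exit_word_def rot_def mod_Suc_eq mod_Suc_Suc_eq)

lemma runC_exit_word:
  "r < p \<Longrightarrow> runC p (exit_word m i s t) r = (if s then transpose (p - 2) (p - 1) else id) (rot p t r)"
  by (simp add: exit_word_def)

lemma runB_exit_word_indep: "runB n (exit_word m i s t) = runB n (exit_word m i s 0)"
  by (simp add: fun_eq_iff exit_word_def)

lemma c_notin_exit_word: "c \<notin> set (exit_word m i s t)"
  by (auto simp: exit_word_def rotB_def rotC_def)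

lemma distinguishable_through_final:
  assumes "3 \<le> m" "3 \<le> n" "3 \<le> p" "2 \<le> i" "i \<le> m - 2"
    and S: "S1 \<subseteq> {..<n} \<times> {..<p}" "S2 \<subseteq> {..<n} \<times> {..<p}" and FG: "F \<subseteq> {..<n}" "G \<subseteq> {..<p}"
    and sep: "\<not> separates F G S1" "separates F G S2"
    and "q < n" and partner: "\<And>x. x < n \<Longrightarrow> x \<noteq> q \<Longrightarrow> \<exists>y<p. separates F G {(x, y)}"
  shows "distinguishable m n p (i, S1) (i, S2)"
proof -
  \<comment> \<open>The exit word inserts (1, 0); s keeps f q away from 1, and t = p - y then makes
    (1, 0) the image of a pair (x, y) that respects the separation.\<close>
  define s where "s = (rot n (m - 2 - i) q = n - 1)"
  define f where "f = runB n (exit_word m i s 0)"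
  have f_bij: "bij_betw f {..<n} {..<n}"
    unfolding f_def using assms(2) by (intro bij_betw_runB c_notin_exit_word) simp
  define v where "v = (if s then transpose (n - 2) (n - 1) else id) (rot n (m - 2 - i) q)"
  have "v \<noteq> n - 1"
    using assms(2) by (auto simp: v_def s_def)
  moreover have "v < n"
    using assms(2) rot_less[of n] by (auto simp: v_def transpose_def)
  moreover have "f q = rot n 2 v"
    using \<open>q < n\<close> by (simp add: f_def v_def runB_exit_word)
  ultimately have "f q \<noteq> 1"
    using rot_two_eq_one[OF assms(2)] by metis
  have "f ` {..<n} = {..<n}" "1 < n"
    using bij_betw_imp_surj_on[OF f_bij] assms(2) by simp_all
  then obtain x where "x < n" "f x = 1"
    by (metis imageE lessThan_iff)
  then obtain y where "y < p" and sep_xy: "separates F G {(x, y)}"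
    using partner \<open>f q \<noteq> 1\<close> by blast
  define u where "u = exit_word m i s (p - y)"
  define g where "g = runC p u"
  have "runB n u = f"
    unfolding u_def f_def by (rule runB_exit_word_indep)
  have "g y = 0"
    using \<open>y < p\<close> assms(3) by (simp add: g_def u_def runC_exit_word rot_def transpose_def)
  have g_bij: "bij_betw g {..<p} {..<p}"
    unfolding g_def u_def using assms(3) by (intro bij_betw_runC c_notin_exit_word) simp
  have run: "runD m n p (i, S) u = (0, map_prod f g ` insert (x, y) S)" for S
    using runD_exit_word[where s = s and t = "p - y" and S = S and p = p] assms \<open>runB n u = f\<close> \<open>f x = 1\<close> \<open>g y = 0\<close>
    by (simp add: u_def g_def)
  show ?thesis
    by (rule distinguishable_after_bijections[OF assms(1-3) f_bij g_bij run run])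
      (use S FG sep sep_xy \<open>x < n\<close> \<open>y < p\<close> in \<open>auto simp: separates_def\<close>)
qed

lemma distinguishable_same_state_separated:
  assumes "3 \<le> m" "3 \<le> n" "3 \<le> p" "i < m"
    and S: "S1 \<subseteq> {..<n} \<times> {..<p}" "S2 \<subseteq> {..<n} \<times> {..<p}" and FG: "F \<subseteq> {..<n}" "G \<subseteq> {..<p}"
    and sep: "\<not> separates F G S1" "separates F G S2"
    and "q < n" and partner: "\<And>x. x < n \<Longrightarrow> x \<noteq> q \<Longrightarrow> \<exists>y<p. separates F G {(x, y)}"
  shows "distinguishable m n p (i, S1) (i, S2)"
proof (cases "2 \<le> i \<and> i \<le> m - 2")
  case True
  then show ?thesis
    using distinguishable_through_final assms by blast
next
  case False
  then have "i = 0 \<or> i = 1 \<or> i = m - 1"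
    using \<open>i < m\<close> by linarith
  then have "\<exists>u. avoids_final m i u \<and> runA m u i = 0 \<and> c \<notin> set u"
  proof (elim disjE)
    assume "i = 1"
    then show ?thesis
      using assms(1) by (intro exI[of _ "[b]"]) (simp add: redirect_def)
  next
    assume "i = m - 1"
    then show ?thesis
      using assms(1) by (intro exI[of _ "[a]"]) simp
  qed (intro exI[of _ "[]"], simp)
  then obtain u where u: "avoids_final m i u" "runA m u i = 0" "c \<notin> set u"
    by blast
  show ?thesis
  proof (rule distinguishable_after_bijections[OF assms(1-3)])
    show "bij_betw (runB n u) {..<n} {..<n}" "bij_betw (runC p u) {..<p} {..<p}"
      using u(3) assms(2,3) by (simp_all add: bij_betw_runB bij_betw_runC)
    show "runD m n p (i, S1) u = (0, map_prod (runB n u) (runC p u) ` S1)"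
      "runD m n p (i, S2) u = (0, map_prod (runB n u) (runC p u) ` S2)"
      using u by (simp_all add: runD_avoids_final)
  qed (use S FG sep in auto)
qed

definition linked_rows :: "(nat \<times> nat) set \<Rightarrow> nat \<Rightarrow> nat set" where
  "linked_rows S q = insert q {q'. \<exists>r. (q, r) \<in> S \<and> (q', r) \<in> S}"

definition row :: "(nat \<times> nat) set \<Rightarrow> nat \<Rightarrow> nat set" where
  "row S q = {r. (q, r) \<in> S}"

lemma separates_linked_rows: "saturated S \<Longrightarrow> separates (linked_rows S q) (row S q) S"
  unfolding separates_def linked_rows_def row_def saturated_def by blast

lemma linked_rows_partner:
  assumes "S \<subseteq> {..<n} \<times> {..<p}" "(q, r) \<notin> S" "r < p" "x \<noteq> q"
  shows "\<exists>y<p. separates (linked_rows S q) (row S q) {(x, y)}"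
proof (cases "x \<in> linked_rows S q")
  case True
  then obtain r' where "(q, r') \<in> S"
    using \<open>x \<noteq> q\<close> by (auto simp: linked_rows_def)
  then show ?thesis
    using True assms(1) by (auto simp: separates_def row_def)
next
  case False
  then show ?thesis
    using assms(2,3) by (auto simp: separates_def row_def)
qed

lemma distinguishable_same_state:
  assumes "3 \<le> m" "3 \<le> n" "3 \<le> p" "i < m"
    and S: "S1 \<subseteq> {..<n} \<times> {..<p}" "S2 \<subseteq> {..<n} \<times> {..<p}"
    and "saturated S1" "saturated S2" "S1 \<noteq> S2"
  shows "distinguishable m n p (i, S1) (i, S2)"
proof -
  have one_sided: "distinguishable m n p (i, T1) (i, T2)"
    if T: "T1 \<subseteq> {..<n} \<times> {..<p}" "T2 \<subseteq> {..<n} \<times> {..<p}" and "saturated T2"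
      and qr: "(q, r) \<in> T1" "(q, r) \<notin> T2" for T1 T2 q r
  proof (rule distinguishable_same_state_separated[OF assms(1-4) T])
    show "q < n" "linked_rows T2 q \<subseteq> {..<n}" "row T2 q \<subseteq> {..<p}"
      using T qr by (auto simp: linked_rows_def row_def)
    show "\<not> separates (linked_rows T2 q) (row T2 q) T1"
      using qr by (auto simp: separates_def linked_rows_def row_def)
    show "separates (linked_rows T2 q) (row T2 q) T2"
      using \<open>saturated T2\<close> by (rule separates_linked_rows)
    show "\<exists>y<p. separates (linked_rows T2 q) (row T2 q) {(x, y)}" if "x \<noteq> q" for x
      using linked_rows_partner[OF T(2) qr(2) _ that] T qr by auto
  qed
  obtain q r where "(q, r) \<in> S1 \<and> (q, r) \<notin> S2 \<or> (q, r) \<in> S2 \<and> (q, r) \<notin> S1"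
    using \<open>S1 \<noteq> S2\<close> by auto
  then show ?thesis
    using one_sided distinguishable_sym assms by metis
qed

section \<open>States with different A-components\<close>

text \<open>From state 0 the probe loops and its C-component never reaches 0. From j \<noteq> 0 it
  enters the final state during the rotation of B, so each d inserts (0, 0), and column 0 survives
  the final abb.\<close>

definition probe :: "nat \<Rightarrow> nat \<Rightarrow> nat \<Rightarrow> sym list" where
  "probe m p j = [c] @ rotB (m - 1 - transpose (m - 2) (m - 1) j) @ rotC (p - 1) @ [a, b, b]"

lemma home_loop_probe: "3 \<le> m \<Longrightarrow> home_loop m (probe m p j)"
  unfolding probe_def by (intro home_loop_append home_loop_rotB home_loop_rotC home_loop_letters) simp_all

lemma runC_probe_nonzero:
  assumes "3 \<le> p" "r < p"
  shows "runC p (probe m p j) r \<noteq> 0"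
proof -
  have "runC p (probe m p j) r = rot p (p - 1) (redirect 1 0 r)"
    using assms by (simp add: probe_def redirect_def rot_less)
  moreover have "redirect 1 0 r \<noteq> 1" "redirect 1 0 r < p"
    using assms by (auto simp: redirect_def)
  ultimately show ?thesis
    using rot_pred_eq_zero assms(1) by simp
qed

lemma runD_rotC_at_final:
  assumes "fst st = m - 1" "0 < k"
  shows "fst (runD m n p st (rotC k)) = m - 1 \<and> (0, 0) \<in> snd (runD m n p st (rotC k))"
proof -
  have "rotC k = rotC (k - 1) @ [d]"
    using assms(2) by (cases k) (simp_all add: rotC_def replicate_append_same)
  moreover have "fst (runD m n p st (rotC (k - 1))) = m - 1"
    using assms(1) by (simp add: fst_runD)
  ultimately show ?thesis
    using assms(1) by (simp add: fst_runD snd_stepD)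
qed

lemma probe_column_zero:
  assumes "3 \<le> m" "3 \<le> p" "0 < j" "j < m"
  shows "fst (runD m n p (j, X) (probe m p j)) = 0 \<and> (\<exists>q. (q, 0) \<in> snd (runD m n p (j, X) (probe m p j)))"
proof -
  define j' where "j' = transpose (m - 2) (m - 1) j"
  have "0 < j'" "j' < m"
    using assms by (auto simp: j'_def transpose_def)
  then have "runA m (rotB (m - 1 - j')) j' = m - 1"
    using runA_rotB[of j' "m - 1 - j'" m] by simp
  then obtain st where st: "st = runD m n p (j, X) ([c] @ rotB (m - 1 - j') @ rotC (p - 1))"
    "fst st = m - 1" "(0, 0) \<in> snd st"
    using runD_rotC_at_final[of "runD m n p (j, X) ([c] @ rotB (m - 1 - j'))" m "p - 1" n p] assms(2)
    by (simp add: fst_runD j'_def)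
  have run: "runD m n p (j, X) (probe m p j) = runD m n p st [a, b, b]"
    by (simp add: st(1) probe_def j'_def)
  have "stepC p 0 a = 0" "stepC p 0 b = 0"
    using assms(2) by simp_all
  then have "\<exists>q. (q, 0) \<in> snd (runD m n p st [a, b, b])"
    using mem_snd_stepD[of _ _ _ _ a] mem_snd_stepD[of _ _ _ _ b] st(3) by (simp, metis)
  moreover have "fst (runD m n p st [a, b, b]) = 0"
    using st(2) assms(1) by (simp add: fst_runD redirect_def)
  ultimately show ?thesis
    by (simp add: run)
qed

lemma distinguishable_nonzero_zero:
  assumes "3 \<le> m" "3 \<le> n" "3 \<le> p" "0 < j" "j < m"
    and X: "X1 \<subseteq> {..<n} \<times> {..<p}" "X2 \<subseteq> {..<n} \<times> {..<p}"
  shows "distinguishable m n p (j, X1) (0, X2)"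
proof (rule distinguishable_runD[where u = "probe m p j"])
  define T1 where "T1 = snd (runD m n p (j, X1) (probe m p j))"
  define T2 where "T2 = map_prod (runB n (probe m p j)) (runC p (probe m p j)) ` X2"
  have run1: "runD m n p (j, X1) (probe m p j) = (0, T1)" and "\<exists>q. (q, 0) \<in> T1"
    using probe_column_zero[OF assms(1,3-5)] by (simp_all add: T1_def prod_eq_iff)
  have run2: "runD m n p (0, X2) (probe m p j) = (0, T2)"
    using runD_home_loop[OF home_loop_probe[OF assms(1)]] by (simp add: T2_def)
  have "T1 \<subseteq> {..<n} \<times> {..<p}"
    using runD_in_range[of n p "(j, X1)"] X assms(2,3) by (simp add: T1_def)
  moreover have "T2 \<subseteq> {..<n} \<times> {..<p}"
    using X assms(2,3) runB_less[of n] runC_less[of p] by (auto simp: T2_def)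
  moreover have "separates {} {0} T2"
    using X runC_probe_nonzero[OF assms(3)] by (auto simp: separates_def T2_def)
  ultimately show "distinguishable m n p (runD m n p (j, X1) (probe m p j)) (runD m n p (0, X2) (probe m p j))"
    unfolding run1 run2 using \<open>\<exists>q. (q, 0) \<in> T1\<close> assms(1-3)
    by (intro distinguishable_if_separates[where F = "{}" and G = "{0}"]) (auto simp: separates_def)
qed

lemma distinguishable_different_states:
  assumes "3 \<le> m" "3 \<le> n" "3 \<le> p" "i1 < m" "i2 < m" "i1 \<noteq> i2"
    and S: "S1 \<subseteq> {..<n} \<times> {..<p}" "S2 \<subseteq> {..<n} \<times> {..<p}"
  shows "distinguishable m n p (i1, S1) (i2, S2)"
proof (rule distinguishable_runD[where u = "replicate (m - i2) a"])
  define u where "u = replicate (m - i2) a"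
  have fst_run: "fst (runD m n p (i, S) u) = rot m (m - i2) i" if "i < m" for i S
    using that by (simp add: u_def fst_runD runA_replicate_a)
  have "rot m (m - i2) i2 = 0"
    using assms(5) by (simp add: rot_def)
  moreover have "rot m (m - i2) i1 \<noteq> rot m (m - i2) i2"
    using assms(4-6) by (metis rot_inverse diff_le_self)
  ultimately have "0 < rot m (m - i2) i1" "rot m (m - i2) i1 < m"
    using assms(4) by (simp_all add: rot_less)
  moreover have "snd (runD m n p (i, S) u) \<subseteq> {..<n} \<times> {..<p}" if "S \<subseteq> {..<n} \<times> {..<p}" for i S
    using runD_in_range[of n p "(i, S)"] that assms(2,3) by simp
  ultimately have "distinguishable m n p (fst (runD m n p (i1, S1) u), snd (runD m n p (i1, S1) u))
    (fst (runD m n p (i2, S2) u), snd (runD m n p (i2, S2) u))"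
    using fst_run assms \<open>rot m (m - i2) i2 = 0\<close> by (simp add: distinguishable_nonzero_zero)
  then show "distinguishable m n p (runD m n p (i1, S1) u) (runD m n p (i2, S2) u)"
    by simp
qed

theorem theorem3:
  fixes m n p i1 i2 :: nat and S1 S2 :: "(nat \<times> nat) set"
  assumes "m \<ge> 3" and "n \<ge> 3" and "p \<ge> 3"
    and "stateD m n p (i1, S1)" and "stateD m n p (i2, S2)"
    and "(i1, S1) \<noteq> (i2, S2)"
    and "saturated S1" and "saturated S2"
    and "i1 = m - 1 \<Longrightarrow> (0, 0) \<in> S1"
    and "i2 = m - 1 \<Longrightarrow> (0, 0) \<in> S2"
  shows "\<exists>w. finalD n p (runD m n p (i1, S1) w) \<noteq> finalD n p (runD m n p (i2, S2) w)"
proof -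
  have "i1 < m" "i2 < m" "S1 \<subseteq> {..<n} \<times> {..<p}" "S2 \<subseteq> {..<n} \<times> {..<p}"
    using assms(4,5) by (auto simp: stateD_def)
  then have "distinguishable m n p (i1, S1) (i2, S2)"
    using assms(1-3,6-8) distinguishable_same_state distinguishable_different_states
    by (cases "i1 = i2") auto
  then show ?thesis
    unfolding distinguishable_def .
qed

end
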